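(* Let $1\le p\le\infty$, $E=\mathcal{L}^p(I)$, and let $F,F',B,B'\subset E$ be nonempty compact sets with bounds $M_F,M_{F'},M_B,M_{B'}$ respectively (e.g. $\|g\|_p\le M_F$ for all $g\in F$). Then for any $f,b\in E$: $d_{\mathcal H}(F,F*_Tb)\le\frac{\Lambda}{1-\Lambda}(M_F+\|b\|_p)$; $d_{\mathcal H}(B,f*_TB)\le\frac{1}{1-\Lambda}(M_B+\|f\|_p)$; $d_{\mathcal H}(F,F*_TB)\le\frac{\Lambda}{1-\Lambda}(M_F+M_B)$; $d_{\mathcal H}(B,F*_TB)\le\frac{1}{1-\Lambda}(M_B+M_F)$; $d_{\mathcal H}(F*_TB,F'*_TB)\le\frac{1}{1-\Lambda}(M_F+M_{F'})$; $d_{\mathcal H}(F*_TB,F*_TB')\le\frac{\Lambda}{1-\Lambda}(M_B+M_{B'})$; $d_{\mathcal H}(F*_TB,F'*_TB')\le\frac{1}{1-\Lambda}\big((M_F+M_{F'})+\Lambda(M_B+M_{B'})\big)$. For $0<p<1$ the same holds when $\|g\|_p$ is interpreted as $\int_I|g|^p\,dx$ and $\Lambda$ is replaced by $\Lambda^p$.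
   Context: Let $N\ge 2$, $I=[x_0,x_N]$, $\Delta: x_0<\dots<x_N$ a partition, $L_n(x)=a_nx+b_n$ affine with $L_n(x_0)=x_{n-1}$, $L_n(x_N)=x_n$, $I_1=[x_0,x_1]$, $I_n=(x_{n-1},x_n]$ for $n\ge2$, and $\alpha=(\alpha_1,\dots,\alpha_N)\in(\mathcal{L}^\infty(I))^N$ with $\Lambda:=\operatorname{ess\,sup}\{|\alpha_n(x)|:x\in I,n=1,\dots,N\}<1$. For $f,b\in\mathcal{L}^p(I)$, $f*_Tb$ is the unique fixed point in $\mathcal{L}^p(I)$ of the contraction $Tg(x):=f(x)+\alpha_n(L_n^{-1}(x))(g-b)(L_n^{-1}(x))$, $x\in I_n$. For sets: $F*_Tb:=\{f*_Tb:f\in F\}$, $f*_TB:=\{f*_Tb:b\in B\}$, $F*_TB:=\{f*_Tb: f\in F, b\in B\}$. $\delta(x,K):=\inf_{y\in K}\|x-y\|_p$ and the Hausdorff distance is $d_{\mathcal H}(H,K):=\max\{\sup_{x\in H}\delta(x,K),\sup_{y\in K}\delta(y,H)\}$. *)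

theory Defs
  imports "HOL-Analysis.Analysis" "HOL-Probability.Essential_Supremum"
begin

(* Functions on I are represented as real => real; L^p membership and the
   (quasi-)norm are defined w.r.t. Lebesgue measure restricted to I. *)

definition Lp_int :: "real set \<Rightarrow> real \<Rightarrow> (real \<Rightarrow> real) \<Rightarrow> ennreal" where
  "Lp_int I q g = (\<integral>\<^sup>+ t. ennreal (\<bar>g t\<bar> powr q) \<partial>(lebesgue_on I))"

(* p :: ennreal, p = top means p = infinity *)
definition in_Lp :: "real set \<Rightarrow> ennreal \<Rightarrow> (real \<Rightarrow> real) \<Rightarrow> bool" where
  "in_Lp I p g \<longleftrightarrow> g \<in> borel_measurable (lebesgue_on I) \<and>
     (if p = top then esssup (lebesgue_on I) (\<lambda>t. ereal \<bar>g t\<bar>) < \<infinity>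
      else Lp_int I (enn2real p) g < top)"

definition pnorm :: "real set \<Rightarrow> ennreal \<Rightarrow> (real \<Rightarrow> real) \<Rightarrow> real" where
  "pnorm I p g =
     (if p = top then real_of_ereal (esssup (lebesgue_on I) (\<lambda>t. ereal \<bar>g t\<bar>))
      else if 1 \<le> p then enn2real (Lp_int I (enn2real p) g) powr (1 / enn2real p)
      else enn2real (Lp_int I (enn2real p) g))"

definition pdist :: "real set \<Rightarrow> ennreal \<Rightarrow> (real \<Rightarrow> real) \<Rightarrow> (real \<Rightarrow> real) \<Rightarrow> real" where
  "pdist I p g h = pnorm I p (\<lambda>t. g t - h t)"

(* compactness in (L^p(I), pdist): sequential compactness *)
definition Lp_compact :: "real set \<Rightarrow> ennreal \<Rightarrow> (real \<Rightarrow> real) set \<Rightarrow> bool" where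
  "Lp_compact I p K \<longleftrightarrow> (\<forall>g\<in>K. in_Lp I p g) \<and>
     (\<forall>s. (\<forall>k::nat. s k \<in> K) \<longrightarrow>
        (\<exists>r g. strict_mono r \<and> g \<in> K \<and> (\<lambda>k. pdist I p (s (r k)) g) \<longlonglongrightarrow> 0))"

(* affine maps L_n with L_n(x_0) = x_{n-1}, L_n(x_N) = x_n, and their inverses *)
definition Lmap :: "(nat \<Rightarrow> real) \<Rightarrow> nat \<Rightarrow> nat \<Rightarrow> real \<Rightarrow> real" where
  "Lmap x N n t = x (n - 1) + (x n - x (n - 1)) / (x N - x 0) * (t - x 0)"

definition Linv :: "(nat \<Rightarrow> real) \<Rightarrow> nat \<Rightarrow> nat \<Rightarrow> real \<Rightarrow> real" where
  "Linv x N n t = x 0 + (x N - x 0) / (x n - x (n - 1)) * (t - x (n - 1))"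

definition piece :: "(nat \<Rightarrow> real) \<Rightarrow> nat \<Rightarrow> real set" where
  "piece x n = (if n = 1 then {x 0..x 1} else {x (n - 1)<..x n})"

definition Top :: "(nat \<Rightarrow> real) \<Rightarrow> nat \<Rightarrow> (nat \<Rightarrow> real \<Rightarrow> real)
    \<Rightarrow> (real \<Rightarrow> real) \<Rightarrow> (real \<Rightarrow> real) \<Rightarrow> (real \<Rightarrow> real) \<Rightarrow> real \<Rightarrow> real" where
  "Top x N \<alpha> f b g t = f t + (\<Sum>n\<in>{1..N}. indicator (piece x n) t *
      (\<alpha> n (Linv x N n t) * (g (Linv x N n t) - b (Linv x N n t))))"

(* f *_T b : the fixed point of T in L^p(I) (equality in L^p = a.e. equality) *)
definition fstar :: "ennreal \<Rightarrow> (nat \<Rightarrow> real) \<Rightarrow> nat \<Rightarrow> (nat \<Rightarrow> real \<Rightarrow> real)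
    \<Rightarrow> (real \<Rightarrow> real) \<Rightarrow> (real \<Rightarrow> real) \<Rightarrow> (real \<Rightarrow> real)" where
  "fstar p x N \<alpha> f b = (SOME g. in_Lp {x 0..x N} p g \<and>
      (AE t in lebesgue_on {x 0..x N}. Top x N \<alpha> f b g t = g t))"

definition Lam :: "(nat \<Rightarrow> real) \<Rightarrow> nat \<Rightarrow> (nat \<Rightarrow> real \<Rightarrow> real) \<Rightarrow> ereal" where
  "Lam x N \<alpha> = esssup (lebesgue_on {x 0..x N}) (\<lambda>t. ereal (Max ((\<lambda>n. \<bar>\<alpha> n t\<bar>) ` {1..N})))"

definition hdist :: "('a \<Rightarrow> 'a \<Rightarrow> real) \<Rightarrow> 'a set \<Rightarrow> 'a set \<Rightarrow> real" where
  "hdist d H K = max (SUP h\<in>H. INF k\<in>K. d h k) (SUP k\<in>K. INF h\<in>H. d h k)"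

end

theory Submission
  imports Defs
begin

text \<open>Write \<open>T g = f + T_lin (g - b)\<close>, where the linear operator \<open>T_lin\<close> pulls a function back
  along the affine maps \<open>L\<^sub>n\<^sup>-\<^sup>1\<close> and multiplies by \<open>\<alpha>\<^sub>n\<close>. Substituting \<open>t = L\<^sub>n s\<close> on each piece
  and summing the ratios \<open>(x\<^sub>n - x\<^sub>n\<^sub>-\<^sub>1) / (x\<^sub>N - x\<^sub>0)\<close> to one shows that \<open>T_lin\<close> contracts the
  (quasi-)norm by \<open>\<Lambda>\<close> (by \<open>\<Lambda>\<^sup>p\<close> for \<open>p < 1\<close>). Hence \<open>f *\<^sub>T b\<close> exists as the sum of a Neumann
  series, which converges almost everywhere by the Riesz--Fischer argument, and subtracting two
  fixed-point equations gives
  \<open>\<parallel>f\<^sub>1 *\<^sub>T b\<^sub>1 - f\<^sub>2 *\<^sub>T b\<^sub>2\<parallel> \<le> (\<parallel>f\<^sub>1 - f\<^sub>2\<parallel> + \<Lambda> \<parallel>b\<^sub>1 - b\<^sub>2\<parallel>) / (1 - \<Lambda>)\<close>.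
  Since every \<open>g\<close> is the fixed point for \<open>f = b = g\<close>, each Hausdorff bound follows by matching every
  element of one set with an element of the other and estimating \<open>\<parallel>g - g'\<parallel> \<le> \<parallel>g\<parallel> + \<parallel>g'\<parallel>\<close>.
  Compactness of the sets enters only through \<open>L\<^sup>p\<close> membership.\<close>

section \<open>Integrals of powers\<close>

lemma powr_convex_combination_le:
  fixes q l y1 y2 :: real
  assumes q: "1 \<le> q" and "0 \<le> y1" "0 \<le> y2" "0 \<le> l" "l \<le> 1"
  shows "(l * y1 + (1 - l) * y2) powr q \<le> l * y1 powr q + (1 - l) * y2 powr q"
proof -
  have scale: "(c * y) powr q \<le> c * y powr q" if "0 \<le> c" "c \<le> 1" "0 \<le> y" for c y
  proof -
    have "(c * y) powr q = c powr q * y powr q" using that by (simp add: powr_mult)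
    also have "\<dots> \<le> c powr 1 * y powr q"
      by (intro mult_right_mono powr_mono') (use that q in auto)
    finally show ?thesis using that by simp
  qed
  consider "y1 = 0" | "y2 = 0" | "y1 > 0" "y2 > 0" using assms by linarith
  then show ?thesis
  proof cases
    case 1 then show ?thesis using scale[of "1 - l" y2] assms by simp
  next
    case 2 then show ?thesis using scale[of l y1] assms by simp
  next
    case 3
    then show ?thesis
      using convex_onD[OF powr_convex[OF q], of "1 - l" y1 y2] assms by simp
  qed
qed

text \<open>Pointwise core of Minkowski's inequality: \<open>a + b\<close> is \<open>A + B\<close> times a convex combination
  of \<open>a / A\<close> and \<open>b / B\<close>.\<close>

lemma powr_add_le_convex_split:
  fixes q A B a b :: real
  assumes q: "1 \<le> q" and "0 < A" "0 < B" "0 \<le> a" "0 \<le> b"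
  shows "(a + b) powr q
    \<le> (A + B) powr q * (A / (A + B) * (a powr q / A powr q) + B / (A + B) * (b powr q / B powr q))"
proof -
  define l where "l = A / (A + B)"
  have l: "0 \<le> l" "l \<le> 1" "1 - l = B / (A + B)" using assms by (auto simp: l_def field_simps)
  have "l * (a / A) + (1 - l) * (b / B) = (a + b) / (A + B)"
    using assms unfolding l(3) by (simp add: l_def add_divide_distrib)
  then have "a + b = (A + B) * (l * (a / A) + (1 - l) * (b / B))"
    using assms by simp
  then have "(a + b) powr q = (A + B) powr q * (l * (a / A) + (1 - l) * (b / B)) powr q"
    using assms l by (simp add: powr_mult)
  also have "\<dots> \<le> (A + B) powr q * (l * (a / A) powr q + (1 - l) * (b / B) powr q)"
    by (intro mult_left_mono powr_convex_combination_le) (use assms l in auto)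
  finally show ?thesis using assms unfolding l by (simp add: l_def powr_divide)
qed

lemma powr_add_le_add_powr:
  fixes q a b :: real
  assumes q: "0 < q" "q \<le> 1" and "0 \<le> a" "0 \<le> b"
  shows "(a + b) powr q \<le> a powr q + b powr q"
proof (cases "a + b = 0")
  case True then show ?thesis using assms by simp
next
  case False
  define s where "s = a + b"
  have s: "0 < s" using False assms by (simp add: s_def)
  have le_powr: "y \<le> y powr q" if "0 \<le> y" "y \<le> 1" for y
    using powr_mono'[of q 1 y] that q by simp
  have "s powr q = s powr q * (a / s + b / s)"
    using s by (simp add: s_def add_divide_distrib[symmetric])
  also have "\<dots> \<le> s powr q * ((a / s) powr q + (b / s) powr q)"
    by (intro mult_left_mono add_mono le_powr) (use s assms in \<open>auto simp: s_def\<close>)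
  also have "\<dots> = a powr q + b powr q"
    using s assms by (simp add: powr_divide distrib_left)
  finally show ?thesis by (simp add: s_def)
qed

definition powr_integral :: "'a measure \<Rightarrow> real \<Rightarrow> ('a \<Rightarrow> real) \<Rightarrow> ennreal" where
  "powr_integral M q u = (\<integral>\<^sup>+ t. ennreal (\<bar>u t\<bar> powr q) \<partial>M)"

lemma Lp_int_eq_powr_integral: "Lp_int I q g = powr_integral (lebesgue_on I) q g"
  unfolding Lp_int_def powr_integral_def ..

lemma powr_integral_cong_AE:
  "AE t in M. u t = v t \<Longrightarrow> powr_integral M q u = powr_integral M q v"
  unfolding powr_integral_def by (rule nn_integral_cong_AE) auto

lemma powr_integral_eq_0_imp_AE:
  assumes [measurable]: "u \<in> borel_measurable M" and "powr_integral M q u = 0"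
  shows "AE t in M. u t = 0"
proof -
  have "AE t in M. ennreal (\<bar>u t\<bar> powr q) = 0"
    using assms(2) unfolding powr_integral_def by (subst nn_integral_0_iff_AE[symmetric]) auto
  then show ?thesis by eventually_elim (simp add: ennreal_eq_0_iff)
qed

lemma powr_integral_add_eq_if_zero:
  assumes "u \<in> borel_measurable M" "powr_integral M q u = 0"
  shows "powr_integral M q (\<lambda>t. u t + v t) = powr_integral M q v"
  using powr_integral_eq_0_imp_AE[OF assms] by (intro powr_integral_cong_AE) auto

lemma powr_integral_eq_root_powr:
  assumes "powr_integral M q u < \<infinity>" "0 < q"
  shows "powr_integral M q u = ennreal ((enn2real (powr_integral M q u) powr (1 / q)) powr q)"
  using assms by (simp add: powr_powr ennreal_enn2real_if)

theorem powr_integral_Minkowski: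
  fixes q :: real and M :: "'a measure" and u v :: "'a \<Rightarrow> real"
  defines "A \<equiv> enn2real (powr_integral M q u) powr (1 / q)"
    and "B \<equiv> enn2real (powr_integral M q v) powr (1 / q)"
  assumes q: "1 \<le> q" and [measurable]: "u \<in> borel_measurable M" "v \<in> borel_measurable M"
    and fin: "powr_integral M q u < \<infinity>" "powr_integral M q v < \<infinity>"
  shows "powr_integral M q (\<lambda>t. u t + v t) \<le> ennreal ((A + B) powr q)"
proof -
  have u_eq: "powr_integral M q u = ennreal (A powr q)"
    unfolding A_def by (rule powr_integral_eq_root_powr) (use fin q in auto)
  have v_eq: "powr_integral M q v = ennreal (B powr q)"
    unfolding B_def by (rule powr_integral_eq_root_powr) (use fin q in auto)
  consider "A = 0" | "B = 0" | "A > 0" "B > 0" unfolding A_def B_def by fastforce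
  then show ?thesis
  proof cases
    case 1
    then show ?thesis
      using powr_integral_add_eq_if_zero[of u M q v] u_eq v_eq q by simp
  next
    case 2
    then show ?thesis
      using powr_integral_add_eq_if_zero[of v M q u] u_eq v_eq q by (simp add: add.commute)
  next
    case 3
    define K1 where "K1 = (A + B) powr q * (A / (A + B)) / A powr q"
    define K2 where "K2 = (A + B) powr q * (B / (A + B)) / B powr q"
    have K: "0 \<le> K1" "0 \<le> K2" unfolding K1_def K2_def using 3 by auto
    have "ennreal (\<bar>u t + v t\<bar> powr q)
      \<le> ennreal K1 * ennreal (\<bar>u t\<bar> powr q) + ennreal K2 * ennreal (\<bar>v t\<bar> powr q)" for t
    proof -
      have "\<bar>u t + v t\<bar> powr q \<le> (\<bar>u t\<bar> + \<bar>v t\<bar>) powr q"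
        by (rule powr_mono2) (use q in auto)
      also have "\<dots> \<le> K1 * \<bar>u t\<bar> powr q + K2 * \<bar>v t\<bar> powr q"
        using powr_add_le_convex_split[OF q 3, of "\<bar>u t\<bar>" "\<bar>v t\<bar>"]
        unfolding K1_def K2_def by (simp add: field_simps)
      finally show ?thesis
        using K by (simp add: ennreal_mult[symmetric] ennreal_plus[symmetric] del: ennreal_plus)
    qed
    then have "powr_integral M q (\<lambda>t. u t + v t)
      \<le> (\<integral>\<^sup>+ t. ennreal K1 * ennreal (\<bar>u t\<bar> powr q) + ennreal K2 * ennreal (\<bar>v t\<bar> powr q) \<partial>M)"
      unfolding powr_integral_def by (intro nn_integral_mono)
    also have "\<dots> = ennreal K1 * powr_integral M q u + ennreal K2 * powr_integral M q v"
      unfolding powr_integral_def by (simp add: nn_integral_add nn_integral_cmult)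
    also have "\<dots> = ennreal (K1 * A powr q + K2 * B powr q)"
      using K by (simp add: u_eq v_eq ennreal_mult[symmetric] ennreal_plus[symmetric] del: ennreal_plus)
    also have "K1 * A powr q + K2 * B powr q = (A + B) powr q * A / (A + B) + (A + B) powr q * B / (A + B)"
      using 3 unfolding K1_def K2_def by simp
    also have "\<dots> = (A + B) powr q"
      using 3 by (simp add: add_divide_distrib[symmetric] distrib_left[symmetric])
    finally show ?thesis .
  qed
qed

lemma powr_integral_add_le:
  fixes q :: real
  assumes q: "0 < q" "q \<le> 1" and [measurable]: "u \<in> borel_measurable M" "v \<in> borel_measurable M"
  shows "powr_integral M q (\<lambda>t. u t + v t) \<le> powr_integral M q u + powr_integral M q v"
proof -
  have "powr_integral M q (\<lambda>t. u t + v t)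
    \<le> (\<integral>\<^sup>+ t. ennreal (\<bar>u t\<bar> powr q) + ennreal (\<bar>v t\<bar> powr q) \<partial>M)"
    unfolding powr_integral_def
  proof (rule nn_integral_mono)
    fix t
    have "\<bar>u t + v t\<bar> powr q \<le> (\<bar>u t\<bar> + \<bar>v t\<bar>) powr q"
      by (rule powr_mono2) (use q in auto)
    also have "\<dots> \<le> \<bar>u t\<bar> powr q + \<bar>v t\<bar> powr q" by (rule powr_add_le_add_powr) (use q in auto)
    finally show "ennreal (\<bar>u t + v t\<bar> powr q) \<le> ennreal (\<bar>u t\<bar> powr q) + ennreal (\<bar>v t\<bar> powr q)"
      by (simp add: ennreal_plus[symmetric] del: ennreal_plus)
  qed
  also have "\<dots> = powr_integral M q u + powr_integral M q v"
    unfolding powr_integral_def by (simp add: nn_integral_add)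
  finally show ?thesis .
qed

lemma AE_bdd_above_if_powr_integral_bounded:
  fixes W :: "nat \<Rightarrow> 'a \<Rightarrow> real"
  assumes q: "0 < q" and W_meas [measurable]: "\<And>m. W m \<in> borel_measurable M"
    and nonneg: "\<And>m s. 0 \<le> W m s" and mono: "\<And>m s. W m s \<le> W (Suc m) s"
    and bound: "\<And>m. powr_integral M q (W m) \<le> ennreal K"
  shows "AE s in M. bdd_above (range (\<lambda>m. W m s))"
proof -
  define F where "F m s = ennreal (W m s powr q)" for m s
  have [measurable]: "F m \<in> borel_measurable M" for m unfolding F_def by measurable
  have "incseq F"
    by (rule incseq_SucI) (auto simp: le_fun_def F_def intro!: ennreal_leI powr_mono2 mono nonneg q[THEN less_imp_le])
  then have "(\<integral>\<^sup>+ s. (SUP m. F m s) \<partial>M) = (SUP m. integral\<^sup>N M (F m))"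
    by (intro nn_integral_monotone_convergence_SUP) auto
  also have "\<dots> \<le> ennreal K"
    using bound nonneg unfolding F_def powr_integral_def by (intro SUP_least) simp
  finally have "(\<integral>\<^sup>+ s. (SUP m. F m s) \<partial>M) \<noteq> \<infinity>"
    by (metis ennreal_neq_top infinity_ennreal_def neq_top_trans)
  then have "AE s in M. (SUP m. F m s) \<noteq> \<infinity>"
    by (intro nn_integral_PInf_AE) auto
  then show ?thesis
  proof eventually_elim
    case (elim s)
    define R where "R = enn2real (SUP m. F m s)"
    have "(SUP m. F m s) < top" using elim by (simp add: less_top[symmetric])
    then have SUP_eq: "(SUP m. F m s) = ennreal R"
      unfolding R_def by (rule ennreal_enn2real[symmetric])
    have "W m s \<le> R powr (1 / q)" for m
    proof -
      have "F m s \<le> ennreal R" unfolding SUP_eq[symmetric] by (rule SUP_upper) simp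
      then have "W m s powr q \<le> R" unfolding F_def R_def by (simp add: ennreal_le_iff)
      then have "(W m s powr q) powr (1 / q) \<le> R powr (1 / q)" by (intro powr_mono2) (use q in auto)
      then show ?thesis using q nonneg[of m s] by (simp add: powr_powr)
    qed
    then show ?case by (intro bdd_aboveI2)
  qed
qed

section \<open>\<open>L\<^sup>p\<close> (quasi-)norms on a set of reals\<close>

locale Lp_space =
  fixes I :: "real set" and p :: ennreal
  assumes measure_nonzero: "emeasure (lebesgue_on I) (space (lebesgue_on I)) \<noteq> 0"
    and p_pos: "0 < p"
begin

abbreviation "M \<equiv> lebesgue_on I"
abbreviation "q \<equiv> enn2real p"
abbreviation "esssup_abs u \<equiv> esssup M (\<lambda>t. ereal \<bar>u t\<bar>)"

definition pnorm_power :: "real \<Rightarrow> real" where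
  "pnorm_power r = (if 1 \<le> p then r powr q else r)"

lemma q_pos: "p \<noteq> top \<Longrightarrow> 0 < q"
  using p_pos by (cases p) auto

lemma one_le_p_iff: "p \<noteq> top \<Longrightarrow> 1 \<le> p \<longleftrightarrow> 1 \<le> q"
  by (cases p) auto

lemma pnorm_power_nonneg: "0 \<le> r \<Longrightarrow> 0 \<le> pnorm_power r"
  unfolding pnorm_power_def by simp

lemma pnorm_power_mono: "p \<noteq> top \<Longrightarrow> 0 \<le> a \<Longrightarrow> a \<le> b \<Longrightarrow> pnorm_power a \<le> pnorm_power b"
  unfolding pnorm_power_def using q_pos by (auto intro: powr_mono2)

lemma esssup_abs_nonneg: "0 \<le> esssup_abs u"
proof -
  have "esssup M (\<lambda>t. 0 :: ereal) \<le> esssup_abs u" by (rule esssup_mono) auto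
  then show ?thesis using esssup_const[OF measure_nonzero, of "0 :: ereal"] by simp
qed

lemma pnorm_nonneg: "0 \<le> pnorm I p u"
  unfolding pnorm_def by (auto simp: real_of_ereal_pos esssup_abs_nonneg)

lemma pdist_nonneg: "0 \<le> pdist I p u v"
  unfolding pdist_def by (rule pnorm_nonneg)

lemma pnorm_uminus: "pnorm I p (\<lambda>t. - u t) = pnorm I p u"
  unfolding pnorm_def Lp_int_def by simp

lemma in_Lp_uminus: "in_Lp I p u \<Longrightarrow> in_Lp I p (\<lambda>t. - u t)"
  unfolding in_Lp_def Lp_int_def by auto

lemma pnorm_abs: "pnorm I p (\<lambda>t. \<bar>u t\<bar>) = pnorm I p u"
  unfolding pnorm_def Lp_int_def by simp

lemma in_Lp_abs: "in_Lp I p u \<Longrightarrow> in_Lp I p (\<lambda>t. \<bar>u t\<bar>)"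
  unfolding in_Lp_def Lp_int_def by auto

lemma pnorm_zero: "pnorm I p (\<lambda>t. 0) = 0"
  unfolding pnorm_def Lp_int_def using esssup_const[OF measure_nonzero, of "0 :: ereal"] p_pos
  by (auto simp: zero_ereal_def)

lemma pdist_self: "pdist I p u u = 0"
  unfolding pdist_def by (simp add: pnorm_zero)

lemma in_Lp_zero: "in_Lp I p (\<lambda>t. 0)"
  unfolding in_Lp_def Lp_int_def using esssup_const[OF measure_nonzero, of "0 :: ereal"] p_pos
  by (auto simp: zero_ereal_def)

lemma in_Lp_measurable: "in_Lp I p u \<Longrightarrow> u \<in> borel_measurable M"
  unfolding in_Lp_def by simp

lemma AE_abs_le_pnorm:
  assumes "in_Lp I p u" "p = top"
  shows "AE t in M. \<bar>u t\<bar> \<le> pnorm I p u"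
proof -
  have "esssup_abs u < \<infinity>" using assms unfolding in_Lp_def by simp
  then have "esssup_abs u = ereal (pnorm I p u)"
    using esssup_abs_nonneg[of u] assms(2) unfolding pnorm_def by (cases "esssup_abs u") auto
  then show ?thesis using esssup_AE[of "\<lambda>t. ereal \<bar>u t\<bar>" M] by simp
qed

lemma pnorm_top_le:
  assumes "p = top" "u \<in> borel_measurable M" "AE t in M. \<bar>u t\<bar> \<le> C"
  shows "in_Lp I p u \<and> pnorm I p u \<le> C"
proof -
  have "esssup_abs u \<le> ereal C" using assms by (intro esssup_I) auto
  then have "esssup_abs u < \<infinity> \<and> real_of_ereal (esssup_abs u) \<le> C"
    using esssup_abs_nonneg[of u] by (cases "esssup_abs u") auto
  then show ?thesis using assms unfolding in_Lp_def pnorm_def by simp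
qed

lemma powr_integral_eq_pnorm_power:
  assumes "in_Lp I p u" "p \<noteq> top"
  shows "powr_integral M q u = ennreal (pnorm_power (pnorm I p u))"
proof -
  have fin: "powr_integral M q u < \<infinity>"
    using assms unfolding in_Lp_def Lp_int_eq_powr_integral by simp
  show ?thesis
  proof (cases "1 \<le> p")
    case True
    then show ?thesis
      using powr_integral_eq_root_powr[OF fin q_pos[OF assms(2)]] assms(2)
      unfolding pnorm_def pnorm_power_def Lp_int_eq_powr_integral by simp
  next
    case False
    then show ?thesis
      using fin assms(2) unfolding pnorm_def pnorm_power_def Lp_int_eq_powr_integral
      by (simp add: ennreal_enn2real_if)
  qed
qed

lemma pnorm_finite_le:
  assumes "p \<noteq> top" "u \<in> borel_measurable M" "0 \<le> C"
    and le: "powr_integral M q u \<le> ennreal (pnorm_power C)"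
  shows "in_Lp I p u \<and> pnorm I p u \<le> C"
proof -
  have C: "0 \<le> pnorm_power C" using assms(3) by (rule pnorm_power_nonneg)
  have "powr_integral M q u < \<infinity>" using le by (simp add: le_less_trans)
  then have in_Lp: "in_Lp I p u"
    using assms unfolding in_Lp_def Lp_int_eq_powr_integral by simp
  have le': "enn2real (powr_integral M q u) \<le> pnorm_power C" by (rule enn2real_leI[OF C le])
  show ?thesis
  proof (cases "1 \<le> p")
    case True
    have "enn2real (powr_integral M q u) powr (1 / q) \<le> (C powr q) powr (1 / q)"
      using le' True by (intro powr_mono2) (auto simp: pnorm_power_def)
    also have "\<dots> = C" using assms q_pos by (simp add: powr_powr)
    finally show ?thesis
      using in_Lp True assms(1) unfolding pnorm_def Lp_int_eq_powr_integral by simp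
  next
    case False
    then show ?thesis
      using in_Lp le' assms(1) unfolding pnorm_def pnorm_power_def Lp_int_eq_powr_integral by simp
  qed
qed

lemma in_Lp_cong_AE:
  assumes "in_Lp I p u" "v \<in> borel_measurable M" "AE t in M. v t = u t"
  shows "in_Lp I p v \<and> pnorm I p v = pnorm I p u"
proof (cases "p = top")
  case True
  have "esssup_abs v = esssup_abs u"
    using assms in_Lp_measurable[OF assms(1)] by (intro esssup_AE_cong) auto
  then show ?thesis using assms True unfolding in_Lp_def pnorm_def by simp
next
  case False
  have "powr_integral M q v = powr_integral M q u" by (rule powr_integral_cong_AE) (use assms in auto)
  then show ?thesis using assms False unfolding in_Lp_def pnorm_def Lp_int_eq_powr_integral by simp
qed

lemma pnorm_dominated_le:
  assumes u: "in_Lp I p u" and v [measurable]: "v \<in> borel_measurable M"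
    and dom: "AE t in M. \<bar>v t\<bar> \<le> \<bar>u t\<bar>"
  shows "in_Lp I p v \<and> pnorm I p v \<le> pnorm I p u"
proof (cases "p = top")
  case True
  have "AE t in M. \<bar>v t\<bar> \<le> pnorm I p u"
    using dom AE_abs_le_pnorm[OF u True] by eventually_elim simp
  then show ?thesis using pnorm_top_le[OF True v] by blast
next
  case False
  have "AE t in M. ennreal (\<bar>v t\<bar> powr q) \<le> ennreal (\<bar>u t\<bar> powr q)"
    using dom by eventually_elim (use q_pos[OF False] in \<open>auto intro: ennreal_leI powr_mono2\<close>)
  then have "powr_integral M q v \<le> powr_integral M q u"
    unfolding powr_integral_def by (rule nn_integral_mono_AE)
  also have "\<dots> = ennreal (pnorm_power (pnorm I p u))"
    by (rule powr_integral_eq_pnorm_power[OF u False])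
  finally show ?thesis by (rule pnorm_finite_le[OF False v pnorm_nonneg])
qed

theorem pnorm_triangle:
  assumes u: "in_Lp I p u" and v: "in_Lp I p v"
  shows "in_Lp I p (\<lambda>t. u t + v t) \<and> pnorm I p (\<lambda>t. u t + v t) \<le> pnorm I p u + pnorm I p v"
proof -
  have [measurable]: "u \<in> borel_measurable M" "v \<in> borel_measurable M"
    using u v by (auto simp: in_Lp_measurable)
  have sum_meas: "(\<lambda>t. u t + v t) \<in> borel_measurable M" by measurable
  show ?thesis
  proof (cases "p = top")
    case True
    have "AE t in M. \<bar>u t + v t\<bar> \<le> pnorm I p u + pnorm I p v"
      using AE_abs_le_pnorm[OF u True] AE_abs_le_pnorm[OF v True] by eventually_elim auto
    then show ?thesis using pnorm_top_le[OF True sum_meas] by blast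
  next
    case False
    have fin: "powr_integral M q u < \<infinity>" "powr_integral M q v < \<infinity>"
      using u v False unfolding in_Lp_def Lp_int_eq_powr_integral by auto
    have "powr_integral M q (\<lambda>t. u t + v t) \<le> ennreal (pnorm_power (pnorm I p u + pnorm I p v))"
    proof (cases "1 \<le> p")
      case True
      then show ?thesis
        using powr_integral_Minkowski[of q u M v] fin False one_le_p_iff
        unfolding pnorm_def pnorm_power_def Lp_int_eq_powr_integral by simp
    next
      case less: False
      have "powr_integral M q (\<lambda>t. u t + v t) \<le> powr_integral M q u + powr_integral M q v"
        using q_pos[OF False] one_le_p_iff[OF False] less by (intro powr_integral_add_le) auto
      then show ?thesis
        using powr_integral_eq_pnorm_power[OF u False] powr_integral_eq_pnorm_power[OF v False] less
          pnorm_nonneg[of u] pnorm_nonneg[of v]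
        by (simp add: pnorm_power_def)
    qed
    then show ?thesis
      using pnorm_nonneg[of u] pnorm_nonneg[of v] by (intro pnorm_finite_le[OF False sum_meas]) auto
  qed
qed

lemma pnorm_diff_le:
  assumes "in_Lp I p u" "in_Lp I p v"
  shows "in_Lp I p (\<lambda>t. u t - v t) \<and> pnorm I p (\<lambda>t. u t - v t) \<le> pnorm I p u + pnorm I p v"
  using pnorm_triangle[OF assms(1) in_Lp_uminus[OF assms(2)]] pnorm_uminus[of v] by simp

lemma pdist_le_pnorm_add: "in_Lp I p u \<Longrightarrow> in_Lp I p v \<Longrightarrow> pdist I p u v \<le> pnorm I p u + pnorm I p v"
  unfolding pdist_def using pnorm_diff_le by blast

lemma pnorm_sum_abs_le:
  fixes u :: "nat \<Rightarrow> real \<Rightarrow> real"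
  assumes "\<And>k. in_Lp I p (u k)"
  shows "in_Lp I p (\<lambda>s. \<Sum>k<m. \<bar>u k s\<bar>) \<and> pnorm I p (\<lambda>s. \<Sum>k<m. \<bar>u k s\<bar>) \<le> (\<Sum>k<m. pnorm I p (u k))"
proof (induction m)
  case 0
  then show ?case using in_Lp_zero pnorm_zero by simp
next
  case (Suc m)
  then show ?case
    using pnorm_triangle[OF conjunct1[OF Suc] in_Lp_abs[OF assms, of m]] pnorm_abs[of "u m"] by auto
qed

text \<open>Lower semicontinuity of the (quasi-)norm, from Fatou's lemma.\<close>

lemma pnorm_limit_le:
  assumes lim: "AE s in M. (\<lambda>m. u m s) \<longlonglongrightarrow> v s"
    and u: "\<And>m. in_Lp I p (u m)" "\<And>m. pnorm I p (u m) \<le> C"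
    and v [measurable]: "v \<in> borel_measurable M"
  shows "in_Lp I p v \<and> pnorm I p v \<le> C"
proof (cases "p = top")
  case True
  have "AE s in M. \<bar>u m s\<bar> \<le> C" for m
    using AE_abs_le_pnorm[OF u(1) True, of m] by eventually_elim (use u(2)[of m] in auto)
  then have "AE s in M. \<forall>m. \<bar>u m s\<bar> \<le> C" by (simp add: AE_all_countable)
  with lim have "AE s in M. \<bar>v s\<bar> \<le> C"
  proof eventually_elim
    case (elim s)
    show ?case by (rule LIMSEQ_le_const2[OF tendsto_rabs[OF elim(1)]]) (use elim(2) in auto)
  qed
  then show ?thesis using pnorm_top_le[OF True v] by blast
next
  case False
  have q: "0 < q" by (rule q_pos[OF False])
  have [measurable]: "u m \<in> borel_measurable M" for m using u(1) by (rule in_Lp_measurable)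
  have "powr_integral M q v = (\<integral>\<^sup>+ s. liminf (\<lambda>m. ennreal (\<bar>u m s\<bar> powr q)) \<partial>M)"
    unfolding powr_integral_def
  proof (rule nn_integral_cong_AE)
    show "AE s in M. ennreal (\<bar>v s\<bar> powr q) = liminf (\<lambda>m. ennreal (\<bar>u m s\<bar> powr q))"
      using lim
    proof eventually_elim
      case (elim s)
      have "(\<lambda>m. ennreal (\<bar>u m s\<bar> powr q)) \<longlonglongrightarrow> ennreal (\<bar>v s\<bar> powr q)"
        by (intro tendsto_ennrealI tendsto_powr' tendsto_rabs elim tendsto_const) (use q in auto)
      then show ?case by (rule lim_imp_Liminf[OF trivial_limit_sequentially, symmetric])
    qed
  qed
  also have "\<dots> \<le> liminf (\<lambda>m. powr_integral M q (u m))"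
    unfolding powr_integral_def by (rule nn_integral_liminf) measurable
  also have "\<dots> \<le> ennreal (pnorm_power C)"
  proof (rule Liminf_le[OF sequentially_bot always_eventually, rule_format])
    fix m
    show "powr_integral M q (u m) \<le> ennreal (pnorm_power C)"
      using powr_integral_eq_pnorm_power[OF u(1) False] pnorm_power_mono[OF False pnorm_nonneg u(2)]
      by (simp add: ennreal_leI)
  qed
  finally show ?thesis
    using pnorm_nonneg[of "u 0"] u(2)[of 0] by (intro pnorm_finite_le[OF False v]) auto
qed

lemma AE_bdd_above_if_pnorm_bounded:
  assumes nonneg: "\<And>m s. 0 \<le> W m s" and mono: "\<And>m s. W m s \<le> W (Suc m) s"
    and W: "\<And>m. in_Lp I p (W m)" "\<And>m. pnorm I p (W m) \<le> C"
  shows "AE s in M. bdd_above (range (\<lambda>m. W m s))"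
proof (cases "p = top")
  case True
  have "AE s in M. W m s \<le> C" for m
    using AE_abs_le_pnorm[OF W(1) True, of m] by eventually_elim (use W(2)[of m] in auto)
  then have "AE s in M. \<forall>m. W m s \<le> C" by (simp add: AE_all_countable)
  then show ?thesis by eventually_elim (rule bdd_aboveI2, blast)
next
  case False
  have "powr_integral M q (W m) \<le> ennreal (pnorm_power C)" for m
    using powr_integral_eq_pnorm_power[OF W(1) False] pnorm_power_mono[OF False pnorm_nonneg W(2)]
    by (simp add: ennreal_leI)
  then show ?thesis
    using q_pos[OF False] in_Lp_measurable[OF W(1)] nonneg mono
    by (intro AE_bdd_above_if_powr_integral_bounded[where q = q and W = W and M = M])
qed

text \<open>Completeness of \<open>L\<^sup>p\<close>, in the form of the Riesz--Fischer argument.\<close>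

theorem in_Lp_suminf:
  fixes u :: "nat \<Rightarrow> real \<Rightarrow> real"
  assumes u: "\<And>k. in_Lp I p (u k)" and bound: "\<And>m. (\<Sum>k<m. pnorm I p (u k)) \<le> C"
  shows "(AE s in M. summable (\<lambda>k. u k s)) \<and> in_Lp I p (\<lambda>s. \<Sum>k. u k s)"
proof -
  have [measurable]: "u k \<in> borel_measurable M" for k using u by (rule in_Lp_measurable)
  define W where "W m s = (\<Sum>k<m. \<bar>u k s\<bar>)" for m s
  have W: "in_Lp I p (W m)" "pnorm I p (W m) \<le> C" for m
    using pnorm_sum_abs_le[of u m, OF u] bound[of m] unfolding W_def by auto
  have "AE s in M. bdd_above (range (\<lambda>m. W m s))"
    by (rule AE_bdd_above_if_pnorm_bounded[OF _ _ W]) (auto simp: W_def)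
  then have summable: "AE s in M. summable (\<lambda>k. u k s)"
  proof eventually_elim
    case (elim s)
    then obtain R where "\<And>m. W m s \<le> R" by (auto simp: bdd_above_def)
    then have "summable (\<lambda>k. \<bar>u k s\<bar>)"
      by (intro summableI_nonneg_bounded[of _ R]) (auto simp: W_def)
    then show ?case by (rule summable_rabs_cancel)
  qed
  have partial_sums: "in_Lp I p (\<lambda>s. \<Sum>k<m. u k s) \<and> pnorm I p (\<lambda>s. \<Sum>k<m. u k s) \<le> C" for m
  proof -
    have "AE s in M. \<bar>\<Sum>k<m. u k s\<bar> \<le> \<bar>W m s\<bar>"
      unfolding W_def by (simp add: sum_abs)
    moreover have "(\<lambda>s. \<Sum>k<m. u k s) \<in> borel_measurable M" by measurable
    ultimately show ?thesis
      using pnorm_dominated_le[OF W(1)[of m]] W(2)[of m] by fastforce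
  qed
  have "AE s in M. (\<lambda>m. \<Sum>k<m. u k s) \<longlonglongrightarrow> (\<Sum>k. u k s)"
    using summable by eventually_elim (rule summable_LIMSEQ)
  moreover have "(\<lambda>s. \<Sum>k. u k s) \<in> borel_measurable M" by measurable
  ultimately have "in_Lp I p (\<lambda>s. \<Sum>k. u k s)"
    using pnorm_limit_le[of "\<lambda>m s. \<Sum>k<m. u k s" "\<lambda>s. \<Sum>k. u k s" C] partial_sums by blast
  with summable show ?thesis by blast
qed

end

section \<open>The operator \<open>T\<close>\<close>

locale fractal_setting =
  fixes x :: "nat \<Rightarrow> real" and N :: nat and \<alpha> :: "nat \<Rightarrow> real \<Rightarrow> real" and p :: ennreal
  assumes N_ge_2: "2 \<le> N" and x_strict_mono: "strict_mono_on {0..N} x"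
    and \<alpha>_measurable: "\<And>n. n \<in> {1..N} \<Longrightarrow> \<alpha> n \<in> borel_measurable (lebesgue_on {x 0..x N})"
    and Lam_less_1: "Lam x N \<alpha> < 1"
    and p_gt_0: "0 < p"
begin

abbreviation "I \<equiv> {x 0..x N}"

lemma x_less: "n \<in> {1..N} \<Longrightarrow> x (n - 1) < x n"
  by (rule strict_mono_onD[OF x_strict_mono]) auto

lemma x_le: "i \<le> j \<Longrightarrow> j \<le> N \<Longrightarrow> x i \<le> x j"
  by (rule strict_mono_on_leD[OF x_strict_mono]) auto

lemma x_0_less_N: "x 0 < x N"
  by (rule strict_mono_onD[OF x_strict_mono]) (use N_ge_2 in auto)

sublocale Lp_space I p
proof
  show "emeasure (lebesgue_on I) (space (lebesgue_on I)) \<noteq> 0"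
    using x_0_less_N by (simp add: emeasure_restrict_space)
qed (rule p_gt_0)

definition ratio :: "nat \<Rightarrow> real" where
  "ratio n = (x n - x (n - 1)) / (x N - x 0)"

lemma ratio_pos: "n \<in> {1..N} \<Longrightarrow> 0 < ratio n"
  unfolding ratio_def using x_less x_0_less_N by auto

lemma sum_ratio: "(\<Sum>n\<in>{1..N}. ratio n) = 1"
proof -
  have "(\<Sum>n\<in>{1..m}. x n - x (n - 1)) = x m - x 0" for m
    by (induction m) auto
  then show ?thesis unfolding ratio_def using x_0_less_N by (simp add: sum_divide_distrib[symmetric])
qed

lemma piece_subset: "n \<in> {1..N} \<Longrightarrow> piece x n \<subseteq> {x (n - 1)..x n}"
  unfolding piece_def by auto

lemma piece_subset_I:
  assumes n: "n \<in> {1..N}"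
  shows "piece x n \<subseteq> I"
proof -
  have "x 0 \<le> x (n - 1)" "x n \<le> x N" using n by (auto intro!: x_le)
  then show ?thesis using piece_subset[OF n] by auto
qed

lemma piece_sets: "piece x n \<in> sets lebesgue"
  unfolding piece_def by auto

lemma pieces_disjoint:
  assumes "n \<in> {1..N}" "m \<in> {1..N}" "n \<noteq> m" "t \<in> piece x n"
  shows "t \<notin> piece x m"
proof -
  have "t \<notin> piece x m" if "n < m" "t \<in> piece x n" "n \<in> {1..N}" "m \<in> {1..N}" for n m
  proof
    assume "t \<in> piece x m"
    then have "x (m - 1) < t" using that unfolding piece_def by (auto split: if_splits)
    moreover have "t \<le> x n" using piece_subset[OF that(3)] that by auto
    moreover have "x n \<le> x (m - 1)" using that by (intro x_le) auto
    ultimately show False by linarith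
  qed
  then show ?thesis using assms by (cases "n < m") (auto simp: not_less_iff_gr_or_eq)
qed

lemma sum_indicator_piece:
  fixes F :: "nat \<Rightarrow> 'a::semiring_1"
  assumes "m \<in> {1..N}" "t \<in> piece x m"
  shows "(\<Sum>n\<in>{1..N}. indicator (piece x n) t * F n) = F m"
proof -
  have "(\<Sum>n\<in>{1..N}. indicator (piece x n) t * F n)
      = indicator (piece x m) t * F m + (\<Sum>n\<in>{1..N} - {m}. indicator (piece x n) t * F n)"
    using assms by (subst sum.remove) auto
  also have "(\<Sum>n\<in>{1..N} - {m}. indicator (piece x n) t * F n) = 0"
    using pieces_disjoint[OF assms(1) _ _ assms(2)] by (intro sum.neutral) (auto simp: indicator_def)
  finally show ?thesis using assms by simp
qed

lemma Linv_in_I: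
  assumes n: "n \<in> {1..N}" and t: "t \<in> piece x n"
  shows "Linv x N n t \<in> I"
proof -
  define d where "d = x n - x (n - 1)"
  define D where "D = x N - x 0"
  have d: "0 < d" "0 < D" unfolding d_def D_def using x_less[OF n] x_0_less_N by auto
  have t1: "0 \<le> t - x (n - 1)" "t - x (n - 1) \<le> d" using piece_subset[OF n] t unfolding d_def by auto
  have "0 \<le> D / d * (t - x (n - 1))" using d t1 by auto
  moreover have "D / d * (t - x (n - 1)) \<le> D / d * d" using d t1 by (intro mult_left_mono) auto
  moreover have "Linv x N n t = x 0 + D / d * (t - x (n - 1))" unfolding Linv_def D_def d_def by simp
  ultimately show ?thesis using d unfolding D_def by auto
qed

lemma Linv_affine_inverse:
  assumes n: "n \<in> {1..N}"
  shows "Linv x N n (x (n - 1) - ratio n * x 0 + ratio n * s) = s"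
proof -
  have "(x N - x 0) / (x n - x (n - 1)) * ratio n = 1"
    unfolding ratio_def using x_less[OF n] x_0_less_N by simp
  then have "(x N - x 0) / (x n - x (n - 1)) * (ratio n * (s - x 0)) = s - x 0"
    by (metis mult.assoc mult_1)
  moreover have "x (n - 1) - ratio n * x 0 + ratio n * s - x (n - 1) = ratio n * (s - x 0)"
    by (simp add: algebra_simps)
  ultimately show ?thesis unfolding Linv_def by simp
qed

lemma measurable_Linv_comp:
  assumes n: "n \<in> {1..N}" and w: "w \<in> borel_measurable lebesgue"
  shows "(\<lambda>t. w (Linv x N n t)) \<in> borel_measurable lebesgue"
proof -
  define c where "c = (x N - x 0) / (x n - x (n - 1))"
  have c: "c \<noteq> 0" unfolding c_def using x_less[OF n] x_0_less_N by auto
  have "Linv x N n = (\<lambda>t. (x 0 - c * x (n - 1)) + c * t)"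
    unfolding Linv_def c_def by (auto simp: fun_eq_iff right_diff_distrib)
  moreover have "(\<lambda>t::real. (x 0 - c * x (n - 1)) + c * t) \<in> lebesgue \<rightarrow>\<^sub>M lebesgue"
    using lebesgue_affine_measurable[where c = "\<lambda>_. c" and t = "x 0 - c * x (n - 1)"] c by simp
  ultimately show ?thesis using measurable_compose[OF _ w] by (simp add: comp_def)
qed

lemma measurable_piece_Linv:
  fixes w :: "real \<Rightarrow> real"
  assumes n: "n \<in> {1..N}" and w: "w \<in> borel_measurable M"
  shows "(\<lambda>t. indicator (piece x n) t * w (Linv x N n t)) \<in> borel_measurable M"
proof -
  have "(\<lambda>s. indicator I s *\<^sub>R w s) \<in> borel_measurable lebesgue"
    using w by (subst borel_measurable_restrict_space_iff[symmetric]) auto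
  from measurable_Linv_comp[OF n this]
  have "(\<lambda>t. indicator (piece x n) t * (indicator I (Linv x N n t) *\<^sub>R w (Linv x N n t))) \<in> borel_measurable M"
    using piece_sets by (intro measurable_restrict_space1 borel_measurable_times) auto
  moreover have "(\<lambda>t. indicator (piece x n) t * (indicator I (Linv x N n t) *\<^sub>R w (Linv x N n t)))
      = (\<lambda>t. indicator (piece x n) t * w (Linv x N n t))"
    using Linv_in_I[OF n] by (auto simp: fun_eq_iff indicator_def)
  ultimately show ?thesis by simp
qed

lemma measurable_piece_Linv_ennreal:
  fixes w :: "real \<Rightarrow> ennreal"
  assumes n: "n \<in> {1..N}" and w: "w \<in> borel_measurable M"
  shows "(\<lambda>t. indicator (piece x n) t * w (Linv x N n t)) \<in> borel_measurable M"
proof -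
  have "(\<lambda>s. w s * indicator I s) \<in> borel_measurable lebesgue"
    using w by (subst borel_measurable_restrict_space_iff_ennreal[symmetric]) auto
  note comp = measurable_Linv_comp[OF n this]
  have "(\<lambda>t. indicator (piece x n) t * (w (Linv x N n t) * indicator I (Linv x N n t))) \<in> borel_measurable M"
    by (intro measurable_restrict_space1 borel_measurable_times_ennreal[OF _ comp])
      (rule borel_measurable_indicator[OF piece_sets])
  moreover have "(\<lambda>t. indicator (piece x n) t * (w (Linv x N n t) * indicator I (Linv x N n t)))
      = (\<lambda>t. indicator (piece x n) t * w (Linv x N n t))"
    using Linv_in_I[OF n] by (auto simp: fun_eq_iff indicator_def)
  ultimately show ?thesis by simp
qed

text \<open>Substitute \<open>t = x\<^sub>n\<^sub>-\<^sub>1 + ratio n * (s - x\<^sub>0)\<close>, the inverse of \<open>Linv x N n\<close>.\<close>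

lemma nn_integral_piece_Linv_le:
  fixes \<phi> :: "real \<Rightarrow> ennreal"
  assumes n: "n \<in> {1..N}" and \<phi>: "\<phi> \<in> borel_measurable M"
  shows "(\<integral>\<^sup>+ t. indicator (piece x n) t * \<phi> (Linv x N n t) \<partial>M) \<le> ennreal (ratio n) * (\<integral>\<^sup>+ s. \<phi> s \<partial>M)"
proof -
  define \<phi>' where "\<phi>' s = \<phi> s * indicator I s" for s
  have "\<phi>' \<in> borel_measurable lebesgue"
    using \<phi> unfolding \<phi>'_def by (subst borel_measurable_restrict_space_iff_ennreal[symmetric]) auto
  define \<psi> where "\<psi> t = indicator (piece x n) t * \<phi>' (Linv x N n t)" for t
  have \<psi>: "\<psi> \<in> borel_measurable lebesgue"
    unfolding \<psi>_def using \<open>\<phi>' \<in> _\<close> measurable_Linv_comp[OF n] piece_sets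
    by (intro borel_measurable_times_ennreal) auto
  have r: "ratio n \<noteq> 0" "0 < ratio n" using ratio_pos[OF n] by auto
  have "(\<integral>\<^sup>+ t. indicator (piece x n) t * \<phi> (Linv x N n t) \<partial>M)
      = (\<integral>\<^sup>+ t. indicator (piece x n) t * \<phi> (Linv x N n t) * indicator I t \<partial>lebesgue)"
    by (subst nn_integral_restrict_space) auto
  also have "\<dots> = (\<integral>\<^sup>+ t. \<psi> t \<partial>lebesgue)"
  proof (rule nn_integral_cong)
    fix t
    show "indicator (piece x n) t * \<phi> (Linv x N n t) * indicator I t = \<psi> t"
      using piece_subset_I[OF n] Linv_in_I[OF n, of t] unfolding \<psi>_def \<phi>'_def
      by (cases "t \<in> piece x n") auto
  qed
  also have "\<dots> = ennreal \<bar>ratio n\<bar> * (\<integral>\<^sup>+ s. \<psi> (x (n - 1) - ratio n * x 0 + ratio n * s) \<partial>lebesgue)"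
    by (rule nn_integral_real_affine_lebesgue[OF \<psi> r(1)])
  also have "\<dots> \<le> ennreal (ratio n) * (\<integral>\<^sup>+ s. \<phi>' s \<partial>lebesgue)"
  proof -
    have "\<psi> (x (n - 1) - ratio n * x 0 + ratio n * s) \<le> \<phi>' s" for s
      unfolding \<psi>_def Linv_affine_inverse[OF n] by (simp add: indicator_def mult_le_one)
    then show ?thesis using r by (simp add: mult_left_mono nn_integral_mono)
  qed
  also have "(\<integral>\<^sup>+ s. \<phi>' s \<partial>lebesgue) = (\<integral>\<^sup>+ s. \<phi> s \<partial>M)"
    unfolding \<phi>'_def by (subst nn_integral_restrict_space) auto
  finally show ?thesis .
qed

lemma AE_piece_Linv:
  assumes n: "n \<in> {1..N}" and ae: "AE s in M. Q s"
  shows "AE t in M. t \<in> piece x n \<longrightarrow> Q (Linv x N n t)"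
proof -
  from ae obtain Z where Z: "{s \<in> space M. \<not> Q s} \<subseteq> Z" "emeasure M Z = 0" "Z \<in> sets M"
    by (rule AE_E)
  have Z_meas: "(indicator Z :: real \<Rightarrow> ennreal) \<in> borel_measurable M" using Z(3) by simp
  have "(\<integral>\<^sup>+ t. indicator (piece x n) t * indicator Z (Linv x N n t) \<partial>M) \<le> ennreal (ratio n) * (\<integral>\<^sup>+ s. indicator Z s \<partial>M)"
    by (rule nn_integral_piece_Linv_le[OF n Z_meas])
  also have "(\<integral>\<^sup>+ s. indicator Z s \<partial>M) = 0" using Z by simp
  finally have "AE t in M. indicator (piece x n) t * indicator Z (Linv x N n t) = (0::ennreal)"
    using nn_integral_0_iff_AE[OF measurable_piece_Linv_ennreal[OF n Z_meas]] by simp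
  then show ?thesis
  proof eventually_elim
    case (elim t)
    show ?case
    proof
      assume t: "t \<in> piece x n"
      then have "Linv x N n t \<notin> Z" using elim by (auto simp: indicator_def)
      then show "Q (Linv x N n t)" using Z(1) Linv_in_I[OF n t] by auto
    qed
  qed
qed

end

context fractal_setting
begin

definition \<Lambda> :: real where
  "\<Lambda> = real_of_ereal (Lam x N \<alpha>)"

definition \<Lambda>\<^sub>p :: real where
  "\<Lambda>\<^sub>p = (if 1 \<le> p then \<Lambda> else \<Lambda> powr q)"

lemma Lam_nonneg: "0 \<le> Lam x N \<alpha>"
proof -
  have "esssup M (\<lambda>t. 0 :: ereal) \<le> Lam x N \<alpha>"
    unfolding Lam_def
  proof (rule esssup_mono)
    fix t
    have "\<bar>\<alpha> 1 t\<bar> \<le> Max ((\<lambda>n. \<bar>\<alpha> n t\<bar>) ` {1..N})" using N_ge_2 by (intro Max_ge) auto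
    then show "(0 :: ereal) \<le> ereal (Max ((\<lambda>n. \<bar>\<alpha> n t\<bar>) ` {1..N}))"
      by (simp add: zero_ereal_def[symmetric])
  qed auto
  then show ?thesis using esssup_const[OF measure_nonzero, of "0 :: ereal"] by simp
qed

lemma Lam_eq: "Lam x N \<alpha> = ereal \<Lambda>" and \<Lambda>_nonneg: "0 \<le> \<Lambda>" and \<Lambda>_less_1: "\<Lambda> < 1"
  using Lam_nonneg Lam_less_1 unfolding \<Lambda>_def by (cases "Lam x N \<alpha>"; auto)+

lemma AE_abs_\<alpha>_le: "AE s in M. \<forall>n\<in>{1..N}. \<bar>\<alpha> n s\<bar> \<le> \<Lambda>"
  using esssup_AE[of "\<lambda>t. ereal (Max ((\<lambda>n. \<bar>\<alpha> n t\<bar>) ` {1..N}))" M]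
proof eventually_elim
  case (elim s)
  then have "Max ((\<lambda>n. \<bar>\<alpha> n s\<bar>) ` {1..N}) \<le> \<Lambda>" unfolding Lam_def[symmetric] Lam_eq by simp
  then show ?case by (auto intro: order_trans[OF Max_ge])
qed

lemma \<Lambda>\<^sub>p_nonneg: "0 \<le> \<Lambda>\<^sub>p"
  unfolding \<Lambda>\<^sub>p_def using \<Lambda>_nonneg by auto

lemma \<Lambda>\<^sub>p_less_1: "\<Lambda>\<^sub>p < 1"
proof (cases "1 \<le> p \<or> \<Lambda> = 0")
  case True
  then show ?thesis unfolding \<Lambda>\<^sub>p_def using \<Lambda>_less_1 by auto
next
  case False
  then have "p \<noteq> top" by auto
  then have "\<Lambda> powr q < 1 powr q"
    using False \<Lambda>_nonneg \<Lambda>_less_1 q_pos by (intro powr_less_mono2) auto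
  then show ?thesis unfolding \<Lambda>\<^sub>p_def using False by simp
qed

lemma pnorm_power_\<Lambda>\<^sub>p:
  "p \<noteq> top \<Longrightarrow> 0 \<le> r \<Longrightarrow> pnorm_power (\<Lambda>\<^sub>p * r) = \<Lambda> powr q * pnorm_power r"
  unfolding pnorm_power_def \<Lambda>\<^sub>p_def using \<Lambda>_nonneg by (simp add: powr_mult)

lemma sum_power_le_geometric:
  fixes l :: real
  assumes "0 \<le> l" "l < 1"
  shows "(\<Sum>k<m. l ^ k) \<le> 1 / (1 - l)"
proof -
  have "summable (\<lambda>k. l ^ k)" using assms by (intro summable_geometric) simp
  then have "(\<Sum>k<m. l ^ k) \<le> (\<Sum>k. l ^ k)" using assms by (intro sum_le_suminf) auto
  also have "\<dots> = 1 / (1 - l)" using assms by (simp add: suminf_geometric)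
  finally show ?thesis .
qed

definition T_lin :: "(real \<Rightarrow> real) \<Rightarrow> real \<Rightarrow> real" where
  "T_lin u t = (\<Sum>n\<in>{1..N}. indicator (piece x n) t * (\<alpha> n (Linv x N n t) * u (Linv x N n t)))"

lemma Top_eq_T_lin: "Top x N \<alpha> f b g t = f t + T_lin (\<lambda>s. g s - b s) t"
  by (simp add: Top_def T_lin_def)

lemma T_lin_diff: "T_lin (\<lambda>s. u s - v s) t = T_lin u t - T_lin v t"
  unfolding T_lin_def sum_subtractf[symmetric] by (rule sum.cong) (auto simp: right_diff_distrib)

lemma T_lin_piece: "m \<in> {1..N} \<Longrightarrow> t \<in> piece x m \<Longrightarrow> T_lin u t = \<alpha> m (Linv x N m t) * u (Linv x N m t)"
  unfolding T_lin_def by (rule sum_indicator_piece)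

lemma T_lin_outside: "\<forall>m\<in>{1..N}. t \<notin> piece x m \<Longrightarrow> T_lin u t = 0"
  unfolding T_lin_def by (intro sum.neutral) auto

lemma T_lin_comp_eq_sum:
  fixes F :: "real \<Rightarrow> 'a::semiring_1"
  assumes "F 0 = 0"
  shows "F (T_lin u t)
    = (\<Sum>n\<in>{1..N}. indicator (piece x n) t * F (\<alpha> n (Linv x N n t) * u (Linv x N n t)))"
proof (cases "\<exists>m\<in>{1..N}. t \<in> piece x m")
  case True
  then obtain m where m: "m \<in> {1..N}" "t \<in> piece x m" by blast
  show ?thesis unfolding T_lin_piece[OF m] sum_indicator_piece[OF m] ..
next
  case False
  then show ?thesis by (simp add: T_lin_outside assms)
qed

lemma T_lin_measurable:
  assumes u: "u \<in> borel_measurable M"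
  shows "T_lin u \<in> borel_measurable M"
proof -
  have "(\<lambda>t. indicator (piece x n) t * (\<alpha> n (Linv x N n t) * u (Linv x N n t))) \<in> borel_measurable M"
    if n: "n \<in> {1..N}" for n
    using measurable_piece_Linv[OF n borel_measurable_times[OF \<alpha>_measurable[OF n] u]] .
  then show ?thesis unfolding T_lin_def[abs_def] by (rule borel_measurable_sum)
qed

lemma AE_abs_T_lin_le:
  assumes top: "p = top" and u: "in_Lp I p u"
  shows "AE t in M. \<bar>T_lin u t\<bar> \<le> \<Lambda> * pnorm I p u"
proof -
  have bounds: "AE s in M. (\<forall>k\<in>{1..N}. \<bar>\<alpha> k s\<bar> \<le> \<Lambda>) \<and> \<bar>u s\<bar> \<le> pnorm I p u"
    using AE_abs_\<alpha>_le AE_abs_le_pnorm[OF u top] by eventually_elim auto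
  have "\<forall>n\<in>{1..N}. AE t in M. t \<in> piece x n \<longrightarrow>
      (\<forall>k\<in>{1..N}. \<bar>\<alpha> k (Linv x N n t)\<bar> \<le> \<Lambda>) \<and> \<bar>u (Linv x N n t)\<bar> \<le> pnorm I p u"
    using AE_piece_Linv[OF _ bounds] by simp
  then have "AE t in M. \<forall>n\<in>{1..N}. t \<in> piece x n \<longrightarrow>
      (\<forall>k\<in>{1..N}. \<bar>\<alpha> k (Linv x N n t)\<bar> \<le> \<Lambda>) \<and> \<bar>u (Linv x N n t)\<bar> \<le> pnorm I p u"
    by (rule eventually_ball_finite[rotated]) auto
  then show ?thesis
  proof eventually_elim
    case (elim t)
    show ?case
    proof (cases "\<exists>m\<in>{1..N}. t \<in> piece x m")
      case True
      then obtain m where m: "m \<in> {1..N}" "t \<in> piece x m" by blast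
      then have "\<bar>T_lin u t\<bar> = \<bar>\<alpha> m (Linv x N m t)\<bar> * \<bar>u (Linv x N m t)\<bar>"
        by (simp add: T_lin_piece abs_mult)
      also have "\<dots> \<le> \<Lambda> * pnorm I p u"
        using elim m \<Lambda>_nonneg by (intro mult_mono) auto
      finally show ?thesis .
    next
      case False
      then show ?thesis using T_lin_outside[of t u] \<Lambda>_nonneg pnorm_nonneg[of u] by simp
    qed
  qed
qed

lemma powr_integral_T_lin_le:
  assumes fin: "p \<noteq> top" and u: "u \<in> borel_measurable M"
  shows "powr_integral M q (T_lin u) \<le> ennreal (\<Lambda> powr q) * powr_integral M q u"
proof -
  have q: "0 < q" by (rule q_pos[OF fin])
  define \<phi> where "\<phi> n s = ennreal (\<bar>\<alpha> n s * u s\<bar> powr q)" for n s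
  have \<phi>_meas: "\<phi> n \<in> borel_measurable M" if "n \<in> {1..N}" for n
    using \<alpha>_measurable[OF that] u unfolding \<phi>_def by measurable
  have pieces: "ennreal (\<bar>T_lin u t\<bar> powr q) = (\<Sum>n\<in>{1..N}. indicator (piece x n) t * \<phi> n (Linv x N n t))" for t
    unfolding \<phi>_def by (rule T_lin_comp_eq_sum) simp
  have \<phi>_bound: "\<phi> n s \<le> ennreal (\<Lambda> powr q) * ennreal (\<bar>u s\<bar> powr q)"
    if "\<bar>\<alpha> n s\<bar> \<le> \<Lambda>" for n s
  proof -
    have "\<bar>\<alpha> n s * u s\<bar> powr q \<le> \<Lambda> powr q * \<bar>u s\<bar> powr q"
      using that q by (simp add: abs_mult powr_mult mult_right_mono powr_mono2)
    then show ?thesis unfolding \<phi>_def by (simp add: ennreal_mult[symmetric] ennreal_leI)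
  qed
  have \<phi>_le: "(\<integral>\<^sup>+ s. \<phi> n s \<partial>M) \<le> ennreal (\<Lambda> powr q) * powr_integral M q u"
    if n: "n \<in> {1..N}" for n
  proof -
    have "AE s in M. \<phi> n s \<le> ennreal (\<Lambda> powr q) * ennreal (\<bar>u s\<bar> powr q)"
      using AE_abs_\<alpha>_le by eventually_elim (use n in \<open>simp add: \<phi>_bound\<close>)
    then have "(\<integral>\<^sup>+ s. \<phi> n s \<partial>M) \<le> (\<integral>\<^sup>+ s. ennreal (\<Lambda> powr q) * ennreal (\<bar>u s\<bar> powr q) \<partial>M)"
      by (rule nn_integral_mono_AE)
    also have "\<dots> = ennreal (\<Lambda> powr q) * powr_integral M q u"
      unfolding powr_integral_def using u by (intro nn_integral_cmult) simp
    finally show ?thesis .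
  qed
  have "powr_integral M q (T_lin u) = (\<Sum>n\<in>{1..N}. \<integral>\<^sup>+ t. indicator (piece x n) t * \<phi> n (Linv x N n t) \<partial>M)"
    unfolding powr_integral_def pieces
    by (rule nn_integral_sum) (rule measurable_piece_Linv_ennreal[OF _ \<phi>_meas])
  also have "\<dots> \<le> (\<Sum>n\<in>{1..N}. ennreal (ratio n) * (ennreal (\<Lambda> powr q) * powr_integral M q u))"
    using nn_integral_piece_Linv_le[OF _ \<phi>_meas] \<phi>_le
    by (intro sum_mono) (meson mult_left_mono order_trans zero_le)
  also have "\<dots> = (\<Sum>n\<in>{1..N}. ennreal (ratio n)) * (ennreal (\<Lambda> powr q) * powr_integral M q u)"
    by (simp add: sum_distrib_right)
  also have "(\<Sum>n\<in>{1..N}. ennreal (ratio n)) = 1"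
    using ratio_pos sum_ratio by (subst sum_ennreal) (auto simp: less_imp_le)
  finally show ?thesis by simp
qed

theorem pnorm_T_lin_le:
  assumes u: "in_Lp I p u"
  shows "in_Lp I p (T_lin u) \<and> pnorm I p (T_lin u) \<le> \<Lambda>\<^sub>p * pnorm I p u"
proof -
  have u_meas: "u \<in> borel_measurable M" by (rule in_Lp_measurable[OF u])
  show ?thesis
  proof (cases "p = top")
    case True
    have "\<Lambda>\<^sub>p = \<Lambda>" unfolding \<Lambda>\<^sub>p_def using True by simp
    then show ?thesis
      using pnorm_top_le[OF True T_lin_measurable[OF u_meas] AE_abs_T_lin_le[OF True u]] by simp
  next
    case False
    have "powr_integral M q (T_lin u) \<le> ennreal (\<Lambda> powr q) * powr_integral M q u"
      by (rule powr_integral_T_lin_le[OF False u_meas])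
    also have "\<dots> = ennreal (\<Lambda> powr q) * ennreal (pnorm_power (pnorm I p u))"
      by (simp add: powr_integral_eq_pnorm_power[OF u False])
    also have "\<dots> = ennreal (pnorm_power (\<Lambda>\<^sub>p * pnorm I p u))"
      using pnorm_power_\<Lambda>\<^sub>p[OF False pnorm_nonneg]
      by (simp add: ennreal_mult[symmetric] pnorm_power_nonneg pnorm_nonneg)
    finally show ?thesis
      using \<Lambda>\<^sub>p_nonneg pnorm_nonneg[of u]
      by (intro pnorm_finite_le[OF False T_lin_measurable[OF u_meas]]) auto
  qed
qed

lemma pnorm_T_lin_iter_le:
  assumes h: "in_Lp I p h"
  shows "in_Lp I p ((T_lin ^^ k) h) \<and> pnorm I p ((T_lin ^^ k) h) \<le> \<Lambda>\<^sub>p ^ k * pnorm I p h"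
proof (induction k)
  case 0
  then show ?case using h by simp
next
  case (Suc k)
  then have "pnorm I p (T_lin ((T_lin ^^ k) h)) \<le> \<Lambda>\<^sub>p * (\<Lambda>\<^sub>p ^ k * pnorm I p h)"
    using pnorm_T_lin_le[of "(T_lin ^^ k) h"] \<Lambda>\<^sub>p_nonneg by (meson mult_left_mono order_trans)
  then show ?case using pnorm_T_lin_le[of "(T_lin ^^ k) h"] Suc by (simp add: mult.assoc)
qed

text \<open>The solution is the Neumann series \<open>\<Sum>\<^sub>k T_lin\<^sup>k h\<close>, whose terms decay geometrically.\<close>

theorem T_lin_fixed_point_exists:
  assumes h: "in_Lp I p h"
  shows "\<exists>g. in_Lp I p g \<and> (AE t in M. g t = h t + T_lin g t)"
proof -
  define u where "u k = (T_lin ^^ k) h" for k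
  have u: "in_Lp I p (u k)" "pnorm I p (u k) \<le> \<Lambda>\<^sub>p ^ k * pnorm I p h" for k
    using pnorm_T_lin_iter_le[OF h] unfolding u_def by auto
  have "(\<Sum>k<m. pnorm I p (u k)) \<le> 1 / (1 - \<Lambda>\<^sub>p) * pnorm I p h" for m
  proof -
    have "(\<Sum>k<m. pnorm I p (u k)) \<le> (\<Sum>k<m. \<Lambda>\<^sub>p ^ k) * pnorm I p h"
      unfolding sum_distrib_right by (intro sum_mono u(2))
    also have "\<dots> \<le> 1 / (1 - \<Lambda>\<^sub>p) * pnorm I p h"
      by (intro mult_right_mono sum_power_le_geometric \<Lambda>\<^sub>p_nonneg \<Lambda>\<^sub>p_less_1 pnorm_nonneg)
    finally show ?thesis .
  qed
  from in_Lp_suminf[OF u(1) this]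
  have summable: "AE s in M. summable (\<lambda>k. u k s)" and G: "in_Lp I p (\<lambda>s. \<Sum>k. u k s)"
    by auto
  have "\<forall>n\<in>{1..N}. AE t in M. t \<in> piece x n \<longrightarrow> summable (\<lambda>k. u k (Linv x N n t))"
    using AE_piece_Linv[OF _ summable] by simp
  then have "AE t in M. \<forall>n\<in>{1..N}. t \<in> piece x n \<longrightarrow> summable (\<lambda>k. u k (Linv x N n t))"
    by (rule eventually_ball_finite[rotated]) auto
  then have "AE t in M. (\<Sum>k. u k t) = h t + T_lin (\<lambda>s. \<Sum>k. u k s) t"
    using summable
  proof eventually_elim
    case (elim t)
    have "T_lin (\<lambda>s. \<Sum>k. u k s) t = (\<Sum>k. T_lin (u k) t)"
    proof (cases "\<exists>m\<in>{1..N}. t \<in> piece x m")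
      case True
      then obtain m where m: "m \<in> {1..N}" "t \<in> piece x m" by blast
      then show ?thesis
        using suminf_mult[OF elim(1)[rule_format, OF m], of "\<alpha> m (Linv x N m t)"] by (simp add: T_lin_piece)
    next
      case False
      then show ?thesis by (simp add: T_lin_outside)
    qed
    moreover have "(\<Sum>k. u k t) = u 0 t + (\<Sum>k. u (Suc k) t)"
      using suminf_split_head[OF elim(2)] by simp
    moreover have "u 0 = h" "u (Suc k) = T_lin (u k)" for k
      unfolding u_def by simp_all
    ultimately show ?case by simp
  qed
  then show ?thesis using G by blast
qed

definition T_fixed :: "(real \<Rightarrow> real) \<Rightarrow> (real \<Rightarrow> real) \<Rightarrow> (real \<Rightarrow> real) \<Rightarrow> bool" where
  "T_fixed f b g \<longleftrightarrow> in_Lp I p g \<and> (AE t in M. Top x N \<alpha> f b g t = g t)"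

lemma T_fixed_fstar:
  assumes f: "in_Lp I p f" and b: "in_Lp I p b"
  shows "T_fixed f b (fstar p x N \<alpha> f b)"
proof -
  have "in_Lp I p (\<lambda>t. f t - T_lin b t)"
    using pnorm_diff_le[OF f conjunct1[OF pnorm_T_lin_le[OF b]]] by blast
  then obtain g where g: "in_Lp I p g" "AE t in M. g t = (f t - T_lin b t) + T_lin g t"
    using T_lin_fixed_point_exists by blast
  have "AE t in M. Top x N \<alpha> f b g t = g t"
    using g(2) by eventually_elim (simp add: Top_eq_T_lin T_lin_diff)
  with g(1) have "\<exists>g. T_fixed f b g" unfolding T_fixed_def by blast
  then show ?thesis unfolding fstar_def T_fixed_def[symmetric] by (rule someI_ex)
qed

lemma T_fixed_self: "in_Lp I p g \<Longrightarrow> T_fixed g g g"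
  unfolding T_fixed_def Top_eq_T_lin T_lin_def by simp

theorem pdist_T_fixed_le:
  assumes g1: "T_fixed f1 b1 g1" and g2: "T_fixed f2 b2 g2"
    and f: "in_Lp I p f1" "in_Lp I p f2" and b: "in_Lp I p b1" "in_Lp I p b2"
  shows "pdist I p g1 g2 \<le> (pdist I p f1 f2 + \<Lambda>\<^sub>p * pdist I p b1 b2) / (1 - \<Lambda>\<^sub>p)"
proof -
  define e where "e s = (g1 s - g2 s) - (b1 s - b2 s)" for s
  have dg: "in_Lp I p (\<lambda>t. g1 t - g2 t)"
    using g1 g2 pnorm_diff_le unfolding T_fixed_def by blast
  have df: "in_Lp I p (\<lambda>t. f1 t - f2 t)" and db: "in_Lp I p (\<lambda>t. b1 t - b2 t)"
    using f b pnorm_diff_le by blast+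
  have e: "in_Lp I p e" "pnorm I p e \<le> pdist I p g1 g2 + pdist I p b1 b2"
    using pnorm_diff_le[OF dg db] unfolding e_def[abs_def] pdist_def by auto
  have Te: "in_Lp I p (T_lin e)" "pnorm I p (T_lin e) \<le> \<Lambda>\<^sub>p * pnorm I p e"
    using pnorm_T_lin_le[OF e(1)] by auto
  have "AE t in M. Top x N \<alpha> f1 b1 g1 t = g1 t" "AE t in M. Top x N \<alpha> f2 b2 g2 t = g2 t"
    using g1 g2 unfolding T_fixed_def by blast+
  then have "AE t in M. g1 t - g2 t = (f1 t - f2 t) + T_lin e t"
  proof eventually_elim
    case (elim t)
    have "T_lin e t = T_lin (\<lambda>s. g1 s - b1 s) t - T_lin (\<lambda>s. g2 s - b2 s) t"
      unfolding T_lin_diff[symmetric] e_def by (simp add: algebra_simps)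
    then show ?case using elim unfolding Top_eq_T_lin by linarith
  qed
  then have "pdist I p g1 g2 = pnorm I p (\<lambda>t. (f1 t - f2 t) + T_lin e t)"
    using in_Lp_cong_AE[OF conjunct1[OF pnorm_triangle[OF df Te(1)]] in_Lp_measurable[OF dg]]
    unfolding pdist_def by simp
  also have "\<dots> \<le> pdist I p f1 f2 + \<Lambda>\<^sub>p * (pdist I p g1 g2 + pdist I p b1 b2)"
    using pnorm_triangle[OF df Te(1)] Te(2) mult_left_mono[OF e(2) \<Lambda>\<^sub>p_nonneg] unfolding pdist_def
    by linarith
  finally have "(1 - \<Lambda>\<^sub>p) * pdist I p g1 g2 \<le> pdist I p f1 f2 + \<Lambda>\<^sub>p * pdist I p b1 b2"
    by (simp add: algebra_simps)
  then show ?thesis using \<Lambda>\<^sub>p_less_1 by (simp add: pos_le_divide_eq mult.commute)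
qed

end

section \<open>Hausdorff distances\<close>

definition close_sets :: "('a \<Rightarrow> 'a \<Rightarrow> real) \<Rightarrow> real \<Rightarrow> 'a set \<Rightarrow> 'a set \<Rightarrow> bool" where
  "close_sets d c H K \<longleftrightarrow> (\<forall>h\<in>H. \<exists>k\<in>K. d h k \<le> c) \<and> (\<forall>k\<in>K. \<exists>h\<in>H. d h k \<le> c)"

lemma hdist_le_if_close_sets:
  fixes d :: "'a \<Rightarrow> 'a \<Rightarrow> real"
  assumes "H \<noteq> {}" "K \<noteq> {}" and nonneg: "\<And>h k. 0 \<le> d h k" and close: "close_sets d c H K"
  shows "hdist d H K \<le> c"
  unfolding hdist_def
proof (rule max.boundedI)
  show "(SUP h\<in>H. INF k\<in>K. d h k) \<le> c"
  proof (rule cSUP_least[OF assms(1)])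
    fix h assume "h \<in> H"
    then obtain k where "k \<in> K" "d h k \<le> c" using close unfolding close_sets_def by blast
    then show "(INF k\<in>K. d h k) \<le> c"
      by (intro cINF_lower2[where x = k]) (auto intro: bdd_belowI2[where m = 0] nonneg)
  qed
  show "(SUP k\<in>K. INF h\<in>H. d h k) \<le> c"
  proof (rule cSUP_least[OF assms(2)])
    fix k assume "k \<in> K"
    then obtain h where "h \<in> H" "d h k \<le> c" using close unfolding close_sets_def by blast
    then show "(INF h\<in>H. d h k) \<le> c"
      by (intro cINF_lower2[where x = h]) (auto intro: bdd_belowI2[where m = 0] nonneg)
  qed
qed

context Lp_space
begin

lemma close_sets_refl: "close_sets (pdist I p) 0 G G"
  unfolding close_sets_def by (metis order_refl pdist_self)

lemma close_sets_if_pnorm_bounded: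
  assumes "G \<noteq> {}" "G' \<noteq> {}"
    and G: "\<forall>g\<in>G. in_Lp I p g \<and> pnorm I p g \<le> a" and G': "\<forall>g\<in>G'. in_Lp I p g \<and> pnorm I p g \<le> a'"
  shows "close_sets (pdist I p) (a + a') G G'"
proof -
  have "pdist I p g g' \<le> a + a'" if "g \<in> G" "g' \<in> G'" for g g'
    using pdist_le_pnorm_add[of g g'] that G G' by fastforce
  then show ?thesis unfolding close_sets_def using assms(1,2) by blast
qed

end

context fractal_setting
begin

lemma hdist_fstar_set_left:
  assumes "G \<noteq> {}" "C \<noteq> {}"
    and G: "\<forall>g\<in>G. in_Lp I p g \<and> pnorm I p g \<le> a" and C: "\<forall>c\<in>C. in_Lp I p c \<and> pnorm I p c \<le> b"
  shows "hdist (pdist I p) G {fstar p x N \<alpha> g c | g c. g \<in> G \<and> c \<in> C} \<le> \<Lambda>\<^sub>p / (1 - \<Lambda>\<^sub>p) * (a + b)"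
proof (rule hdist_le_if_close_sets)
  have near: "pdist I p g (fstar p x N \<alpha> g c) \<le> \<Lambda>\<^sub>p / (1 - \<Lambda>\<^sub>p) * (a + b)" if "g \<in> G" "c \<in> C" for g c
  proof -
    have "pdist I p g (fstar p x N \<alpha> g c) \<le> (pdist I p g g + \<Lambda>\<^sub>p * pdist I p g c) / (1 - \<Lambda>\<^sub>p)"
      using that G C by (intro pdist_T_fixed_le T_fixed_self T_fixed_fstar) auto
    also have "\<dots> \<le> \<Lambda>\<^sub>p * (a + b) / (1 - \<Lambda>\<^sub>p)"
    proof -
      have "pdist I p g c \<le> a + b" using that G C pdist_le_pnorm_add[of g c] by fastforce
      then show ?thesis using \<Lambda>\<^sub>p_nonneg \<Lambda>\<^sub>p_less_1
        by (intro divide_right_mono) (auto simp: pdist_self intro: mult_left_mono)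
    qed
    finally show ?thesis by simp
  qed
  then show "close_sets (pdist I p) (\<Lambda>\<^sub>p / (1 - \<Lambda>\<^sub>p) * (a + b)) G
      {fstar p x N \<alpha> g c | g c. g \<in> G \<and> c \<in> C}"
    unfolding close_sets_def using \<open>C \<noteq> {}\<close> by blast
qed (use assms in \<open>auto simp: pdist_nonneg\<close>)

lemma hdist_fstar_set_right:
  assumes "G \<noteq> {}" "C \<noteq> {}"
    and G: "\<forall>g\<in>G. in_Lp I p g \<and> pnorm I p g \<le> a" and C: "\<forall>c\<in>C. in_Lp I p c \<and> pnorm I p c \<le> b"
  shows "hdist (pdist I p) C {fstar p x N \<alpha> g c | g c. g \<in> G \<and> c \<in> C} \<le> 1 / (1 - \<Lambda>\<^sub>p) * (b + a)"
proof (rule hdist_le_if_close_sets)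
  have near: "pdist I p c (fstar p x N \<alpha> g c) \<le> 1 / (1 - \<Lambda>\<^sub>p) * (b + a)" if "g \<in> G" "c \<in> C" for g c
  proof -
    have "pdist I p c (fstar p x N \<alpha> g c) \<le> (pdist I p c g + \<Lambda>\<^sub>p * pdist I p c c) / (1 - \<Lambda>\<^sub>p)"
      using that G C by (intro pdist_T_fixed_le T_fixed_self T_fixed_fstar) auto
    also have "\<dots> \<le> (b + a) / (1 - \<Lambda>\<^sub>p)"
    proof -
      have "pdist I p c g \<le> b + a" using that G C pdist_le_pnorm_add[of c g] by fastforce
      then show ?thesis using \<Lambda>\<^sub>p_less_1 by (intro divide_right_mono) (auto simp: pdist_self)
    qed
    finally show ?thesis by simp
  qed
  then show "close_sets (pdist I p) (1 / (1 - \<Lambda>\<^sub>p) * (b + a)) C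
      {fstar p x N \<alpha> g c | g c. g \<in> G \<and> c \<in> C}"
    unfolding close_sets_def using \<open>G \<noteq> {}\<close> by blast
qed (use assms in \<open>auto simp: pdist_nonneg\<close>)

lemma hdist_fstar_sets:
  assumes ne: "G1 \<noteq> {}" "C1 \<noteq> {}" "G2 \<noteq> {}" "C2 \<noteq> {}"
    and Lp: "\<forall>g\<in>G1 \<union> G2 \<union> C1 \<union> C2. in_Lp I p g"
    and G: "close_sets (pdist I p) X G1 G2" and C: "close_sets (pdist I p) Y C1 C2"
  shows "hdist (pdist I p) {fstar p x N \<alpha> g c | g c. g \<in> G1 \<and> c \<in> C1}
      {fstar p x N \<alpha> g c | g c. g \<in> G2 \<and> c \<in> C2} \<le> 1 / (1 - \<Lambda>\<^sub>p) * (X + \<Lambda>\<^sub>p * Y)"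
proof (rule hdist_le_if_close_sets)
  have near: "pdist I p (fstar p x N \<alpha> g1 c1) (fstar p x N \<alpha> g2 c2) \<le> 1 / (1 - \<Lambda>\<^sub>p) * (X + \<Lambda>\<^sub>p * Y)"
    if "g1 \<in> G1" "g2 \<in> G2" "c1 \<in> C1" "c2 \<in> C2" "pdist I p g1 g2 \<le> X" "pdist I p c1 c2 \<le> Y"
    for g1 g2 c1 c2
  proof -
    have "pdist I p (fstar p x N \<alpha> g1 c1) (fstar p x N \<alpha> g2 c2)
        \<le> (pdist I p g1 g2 + \<Lambda>\<^sub>p * pdist I p c1 c2) / (1 - \<Lambda>\<^sub>p)"
      using that Lp by (intro pdist_T_fixed_le T_fixed_fstar) auto
    also have "\<dots> \<le> (X + \<Lambda>\<^sub>p * Y) / (1 - \<Lambda>\<^sub>p)"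
      using that \<Lambda>\<^sub>p_nonneg \<Lambda>\<^sub>p_less_1 by (intro divide_right_mono add_mono mult_left_mono) auto
    finally show ?thesis by simp
  qed
  show "close_sets (pdist I p) (1 / (1 - \<Lambda>\<^sub>p) * (X + \<Lambda>\<^sub>p * Y))
      {fstar p x N \<alpha> g c | g c. g \<in> G1 \<and> c \<in> C1} {fstar p x N \<alpha> g c | g c. g \<in> G2 \<and> c \<in> C2}"
    unfolding close_sets_def
  proof (intro conjI ballI)
    fix h assume "h \<in> {fstar p x N \<alpha> g c | g c. g \<in> G1 \<and> c \<in> C1}"
    then obtain g1 c1 where h: "h = fstar p x N \<alpha> g1 c1" "g1 \<in> G1" "c1 \<in> C1" by blast
    moreover obtain g2 c2 where "g2 \<in> G2" "pdist I p g1 g2 \<le> X" "c2 \<in> C2" "pdist I p c1 c2 \<le> Y"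
      using G C h unfolding close_sets_def by blast
    ultimately show "\<exists>k\<in>{fstar p x N \<alpha> g c | g c. g \<in> G2 \<and> c \<in> C2}.
        pdist I p h k \<le> 1 / (1 - \<Lambda>\<^sub>p) * (X + \<Lambda>\<^sub>p * Y)"
      using near by blast
  next
    fix k assume "k \<in> {fstar p x N \<alpha> g c | g c. g \<in> G2 \<and> c \<in> C2}"
    then obtain g2 c2 where k: "k = fstar p x N \<alpha> g2 c2" "g2 \<in> G2" "c2 \<in> C2" by blast
    moreover obtain g1 c1 where "g1 \<in> G1" "pdist I p g1 g2 \<le> X" "c1 \<in> C1" "pdist I p c1 c2 \<le> Y"
      using G C k unfolding close_sets_def by blast
    ultimately show "\<exists>h\<in>{fstar p x N \<alpha> g c | g c. g \<in> G1 \<and> c \<in> C1}.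
        pdist I p h k \<le> 1 / (1 - \<Lambda>\<^sub>p) * (X + \<Lambda>\<^sub>p * Y)"
      using near by blast
  qed
qed (use ne in \<open>auto simp: pdist_nonneg\<close>)

end

theorem theorem5p2:
  fixes p :: ennreal and x :: "nat \<Rightarrow> real" and N :: nat
    and \<alpha> :: "nat \<Rightarrow> real \<Rightarrow> real"
    and F F' B B' :: "(real \<Rightarrow> real) set"
    and MF MF' MB MB' :: real and f b :: "real \<Rightarrow> real"
  assumes "0 < p" and "2 \<le> N" and "strict_mono_on {0..N} x"
    and "\<forall>n\<in>{1..N}. \<alpha> n \<in> borel_measurable (lebesgue_on {x 0..x N})"
    and "Lam x N \<alpha> < 1"
    and "F \<noteq> {}" "F' \<noteq> {}" "B \<noteq> {}" "B' \<noteq> {}"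
    and "Lp_compact {x 0..x N} p F" "Lp_compact {x 0..x N} p F'"
    and "Lp_compact {x 0..x N} p B" "Lp_compact {x 0..x N} p B'"
    and "\<forall>g\<in>F. pnorm {x 0..x N} p g \<le> MF" "\<forall>g\<in>F'. pnorm {x 0..x N} p g \<le> MF'"
    and "\<forall>g\<in>B. pnorm {x 0..x N} p g \<le> MB" "\<forall>g\<in>B'. pnorm {x 0..x N} p g \<le> MB'"
    and "in_Lp {x 0..x N} p f" "in_Lp {x 0..x N} p b"
  shows "let I = {x 0..x N};
             \<Lambda> = (if 1 \<le> p then real_of_ereal (Lam x N \<alpha>)
                  else real_of_ereal (Lam x N \<alpha>) powr enn2real p);
             d = hdist (pdist I p);
             st = fstar p x N \<alpha>;
             SS = (\<lambda>G C. {st g c | g c. g \<in> G \<and> c \<in> C})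
         in d F ((\<lambda>g. st g b) ` F) \<le> \<Lambda> / (1 - \<Lambda>) * (MF + pnorm I p b)
          \<and> d B ((\<lambda>c. st f c) ` B) \<le> 1 / (1 - \<Lambda>) * (MB + pnorm I p f)
          \<and> d F (SS F B) \<le> \<Lambda> / (1 - \<Lambda>) * (MF + MB)
          \<and> d B (SS F B) \<le> 1 / (1 - \<Lambda>) * (MB + MF)
          \<and> d (SS F B) (SS F' B) \<le> 1 / (1 - \<Lambda>) * (MF + MF')
          \<and> d (SS F B) (SS F B') \<le> \<Lambda> / (1 - \<Lambda>) * (MB + MB')
          \<and> d (SS F B) (SS F' B') \<le> 1 / (1 - \<Lambda>) * ((MF + MF') + \<Lambda> * (MB + MB'))"
proof -
  interpret fractal_setting x N \<alpha> p
    using assms(1-5) by unfold_locales auto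
  have \<Lambda>_eq: "(if 1 \<le> p then real_of_ereal (Lam x N \<alpha>)
      else real_of_ereal (Lam x N \<alpha>) powr enn2real p) = \<Lambda>\<^sub>p"
    unfolding \<Lambda>\<^sub>p_def \<Lambda>_def ..
  have F: "\<forall>g\<in>F. in_Lp I p g \<and> pnorm I p g \<le> MF" and F': "\<forall>g\<in>F'. in_Lp I p g \<and> pnorm I p g \<le> MF'"
    and B: "\<forall>g\<in>B. in_Lp I p g \<and> pnorm I p g \<le> MB" and B': "\<forall>g\<in>B'. in_Lp I p g \<and> pnorm I p g \<le> MB'"
    using assms(10-17) unfolding Lp_compact_def by auto
  have f: "\<forall>g\<in>{f}. in_Lp I p g \<and> pnorm I p g \<le> pnorm I p f"
    and b: "\<forall>g\<in>{b}. in_Lp I p g \<and> pnorm I p g \<le> pnorm I p b"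
    using assms(18,19) by auto
  have images: "(\<lambda>g. fstar p x N \<alpha> g b) ` F = {fstar p x N \<alpha> g c | g c. g \<in> F \<and> c \<in> {b}}"
    "fstar p x N \<alpha> f ` B = {fstar p x N \<alpha> g c | g c. g \<in> {f} \<and> c \<in> B}"
    by auto
  have "1 / (1 - \<Lambda>\<^sub>p) * (0 + \<Lambda>\<^sub>p * (MB + MB')) = \<Lambda>\<^sub>p / (1 - \<Lambda>\<^sub>p) * (MB + MB')" by simp
  then show ?thesis
    unfolding Let_def \<Lambda>_eq images
    using hdist_fstar_set_left[OF assms(6) _ F b] hdist_fstar_set_left[OF assms(6,8) F B]
      hdist_fstar_set_right[OF _ assms(8) f B] hdist_fstar_set_right[OF assms(6,8) F B]
      hdist_fstar_sets[OF assms(6,8,7,8) _ close_sets_if_pnorm_bounded[OF assms(6,7) F F'] close_sets_refl]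
      hdist_fstar_sets[OF assms(6,8,6,9) _ close_sets_refl close_sets_if_pnorm_bounded[OF assms(8,9) B B']]
      hdist_fstar_sets[OF assms(6,8,7,9) _ close_sets_if_pnorm_bounded[OF assms(6,7) F F']
        close_sets_if_pnorm_bounded[OF assms(8,9) B B']]
      F F' B B'
    by auto
qed

end
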